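(* Let $E:[0,\infty)\times\mathbb{R}^2\to\mathbb{R}^2$ and $b:[0,\infty)\times\mathbb{R}^2\to\mathbb{R}$ be continuous with $b$ nowhere vanishing, $B=b\,e_3$, and let $\gamma=1-1/\sqrt2$. Fix $\Delta t>0$, $T>0$, $t^n=n\Delta t$, $N_T=\lfloor T/\Delta t\rfloor$. For each $\varepsilon>0$ let $(x^n_\varepsilon,v^n_\varepsilon)_{0\le n\le N_T}$ be generated (dropping the index $\varepsilon$ inside stages) by: given $(x^n,v^n)$, $$x^{(1)}=x^n+\frac{\gamma\Delta t}{\varepsilon}v^{(1)},\quad v^{(1)}=v^n+\frac{\gamma\Delta t}{\varepsilon}F^{(1)},\quad F^{(1)}=\frac{v^{(1)}}{\varepsilon}\wedge B(t^n,x^n)+E(t^n,x^n);$$ with $\hat t^{(1)}=t^n+\frac{\Delta t}{2\gamma}$ and $\hat x^{(1)}=x^n+\frac{\Delta t}{2\gamma\varepsilon}v^{(1)}$, $$x^{(2)}=x^n+\frac{(1-\gamma)\Delta t}{\varepsilon}v^{(1)}+\frac{\gamma\Delta t}{\varepsilon}v^{(2)},\quad v^{(2)}=v^n+\frac{(1-\gamma)\Delta t}{\varepsilon}F^{(1)}+\frac{\gamma\Delta t}{\varepsilon}F^{(2)},$$ $$F^{(2)}=\frac{v^{(2)}}{\varepsilon}\wedge B(\hat t^{(1)},\hat x^{(1)})+E(\hat t^{(1)},\hat x^{(1)}),$$ and $x^{n+1}=x^{(2)}$, $v^{n+1}=v^{(2)}$. Assume that for every $1\le n\le N_T$ the family $(x^n_\varepsilon,\varepsilon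 v^n_\varepsilon)_{\varepsilon>0}$ is bounded uniformly in $\varepsilon$ and that $(x^0_\varepsilon,\varepsilon v^0_\varepsilon)\to(y^0,0)$ as $\varepsilon\to0$. Then for every $0\le n\le N_T$, $x^n_\varepsilon\to y^n$ as $\varepsilon\to0$, where $(y^n)$ starts from $y^0$ and satisfies $$U^n=U(t^n,y^n),\quad \hat y^{(1)}=y^n+\frac{\Delta t}{2\gamma}U^n,\quad U^{(1)}=U(\hat t^{(1)},\hat y^{(1)}),\quad y^{n+1}=y^n+(1-\gamma)\Delta t\,U^n+\gamma\Delta t\,U^{(1)}.$$
   Context: Vectors of $\mathbb{R}^2$ are identified with vectors $(w_1,w_2,0)$ of $\mathbb{R}^3$, $e_3=(0,0,1)$, and $\wedge$ is the cross product; thus for $w\in\mathbb{R}^2$ and $B=b\,e_3$, $w\wedge B=b\,(w_2,-w_1)\in\mathbb{R}^2$. The guiding-center drift is $U(t,x)=\dfrac{E(t,x)\wedge B(t,x)}{\|B(t,x)\|^2}$. *)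

theory Defs
  imports "HOL-Analysis.Analysis"
begin

text \<open>Vectors of R^2 are modelled as pairs (w1, w2). The cross product
 w \<and> (b e3) = b (w2, -w1).\<close>
definition wedge :: "real \<times> real \<Rightarrow> real \<Rightarrow> real \<times> real" where
  "wedge w b = (b * snd w, - (b * fst w))"

definition gam :: real where
  "gam = 1 - 1 / sqrt 2"

definition drift ::
  "(real \<Rightarrow> real \<times> real \<Rightarrow> real \<times> real) \<Rightarrow> (real \<Rightarrow> real \<times> real \<Rightarrow> real)
     \<Rightarrow> real \<Rightarrow> real \<times> real \<Rightarrow> real \<times> real" where
  "drift E b t x = (1 / (b t x)^2) *\<^sub>R wedge (E t x) (b t x)"

text \<open>One step of the (implicit) two-stage scheme, from (x^n,v^n) at time tn
 to (x^{n+1},v^{n+1}); the stage quantities are existentially quantified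
 (they are uniquely determined by the implicit linear equations).\<close>
definition scheme_step ::
  "(real \<Rightarrow> real \<times> real \<Rightarrow> real \<times> real) \<Rightarrow> (real \<Rightarrow> real \<times> real \<Rightarrow> real)
    \<Rightarrow> real \<Rightarrow> real \<Rightarrow> real \<Rightarrow> real \<times> real \<Rightarrow> real \<times> real
    \<Rightarrow> real \<times> real \<Rightarrow> real \<times> real \<Rightarrow> bool" where
  "scheme_step E b eps dt tn xn vn xn1 vn1 \<longleftrightarrow>
     (\<exists>x1 v1 F1 x2 v2 F2.
        x1 = xn + (gam * dt / eps) *\<^sub>R v1 \<and>
        v1 = vn + (gam * dt / eps) *\<^sub>R F1 \<and>
        F1 = (1 / eps) *\<^sub>R wedge v1 (b tn xn) + E tn xn \<and>
        (let th = tn + dt / (2 * gam);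
             xh = xn + (dt / (2 * gam * eps)) *\<^sub>R v1 in
          x2 = xn + ((1 - gam) * dt / eps) *\<^sub>R v1 + (gam * dt / eps) *\<^sub>R v2 \<and>
          v2 = vn + ((1 - gam) * dt / eps) *\<^sub>R F1 + (gam * dt / eps) *\<^sub>R F2 \<and>
          F2 = (1 / eps) *\<^sub>R wedge v2 (b th xh) + E th xh) \<and>
        xn1 = x2 \<and> vn1 = v2)"

primrec ylim ::
  "(real \<Rightarrow> real \<times> real \<Rightarrow> real \<times> real) \<Rightarrow> (real \<Rightarrow> real \<times> real \<Rightarrow> real)
    \<Rightarrow> real \<Rightarrow> real \<times> real \<Rightarrow> nat \<Rightarrow> real \<times> real" where
  "ylim E b dt y0 0 = y0"
| "ylim E b dt y0 (Suc n) =
     (let tn = real n * dt; yn = ylim E b dt y0 n;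
          Uyn = drift E b tn yn;
          th = tn + dt / (2 * gam);
          yh = yn + (dt / (2 * gam)) *\<^sub>R Uyn;
          U1 = drift E b th yh
      in yn + ((1 - gam) * dt) *\<^sub>R Uyn + (gam * dt) *\<^sub>R U1)"

end

theory Submission
  imports Defs
begin

text \<open>Each stage of the scheme is an implicit equation
  \<open>v = w + (a/\<epsilon>)(v/\<epsilon> \<and> B + E)\<close>. With \<open>u = v/\<epsilon>\<close> and \<open>U = E \<and> B/|B|\<^sup>2\<close> the
  force \<open>v/\<epsilon> \<and> B + E\<close> equals \<open>(u - U) \<and> B\<close>, so the stage equation reads
  \<open>a (u - U) \<and> B - \<epsilon>\<^sup>2 (u - U) = \<epsilon>\<^sup>2 U - \<epsilon> w\<close>. As \<open>z \<and> B\<close> is orthogonal to \<open>z\<close>,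
  \<open>|z \<and> B - c z| \<ge> |B| |z|\<close>, hence \<open>u - U \<rightarrow> 0\<close> as soon as \<open>\<epsilon> w \<rightarrow> 0\<close>: the
  rescaled stage velocity tends to the drift and the stage force tends to \<open>0\<close>.
  In the first stage \<open>w = v\<^sup>n\<close>, and \<open>\<epsilon> v\<^sup>n \<rightarrow> 0\<close> by induction; in the second stage
  \<open>w\<close> also contains \<open>(1 - \<gamma>) \<Delta>t F\<^sup>(\<^sup>1\<^sup>)/\<epsilon>\<close>, which is harmless because \<open>F\<^sup>(\<^sup>1\<^sup>) \<rightarrow> 0\<close>.
  The position update then converges to the limit scheme, and
  \<open>\<epsilon> v\<^sup>n\<^sup>+\<^sup>1 = \<epsilon>\<^sup>2 (v\<^sup>n\<^sup>+\<^sup>1/\<epsilon>) \<rightarrow> 0\<close> propagates the induction.\<close>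

lemma wedge_diff_left: "wedge (u - w) \<beta> = wedge u \<beta> - wedge w \<beta>"
  by (simp add: wedge_def algebra_simps)

lemma wedge_scaleR_left: "wedge (c *\<^sub>R w) \<beta> = c *\<^sub>R wedge w \<beta>"
  by (simp add: wedge_def algebra_simps)

lemma wedge_zero_left [simp]: "wedge 0 \<beta> = 0"
  by (simp add: wedge_def zero_prod_def)

lemma tendsto_wedge [tendsto_intros]:
  "(f \<longlongrightarrow> w) F \<Longrightarrow> (g \<longlongrightarrow> \<beta>) F \<Longrightarrow> ((\<lambda>x. wedge (f x) (g x)) \<longlongrightarrow> wedge w \<beta>) F"
  unfolding wedge_def by (intro tendsto_intros)

lemma norm_wedge_diff_scaleR_ge: "\<bar>\<beta>\<bar> * norm z \<le> norm (wedge z \<beta> - c *\<^sub>R z)"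
proof -
  obtain z1 z2 where z: "z = (z1, z2)" by (cases z)
  have "(\<bar>\<beta>\<bar> * norm z)\<^sup>2 = \<beta>\<^sup>2 * (z1\<^sup>2 + z2\<^sup>2)"
    by (simp add: z norm_Pair power_mult_distrib)
  also have "\<dots> \<le> (\<beta>\<^sup>2 + c\<^sup>2) * (z1\<^sup>2 + z2\<^sup>2)"
    by (intro mult_right_mono) simp_all
  also have "\<dots> = (\<beta> * z2 - c * z1)\<^sup>2 + (- (\<beta> * z1) - c * z2)\<^sup>2"
    by (simp add: power2_eq_square algebra_simps)
  also have "\<dots> = (norm (wedge z \<beta> - c *\<^sub>R z))\<^sup>2"
    by (simp add: z wedge_def norm_Pair)
  finally show ?thesis
    by (rule power2_le_imp_le) simp
qed

lemma wedge_wedge_left: "wedge (wedge g \<beta>) \<beta> = - (\<beta>\<^sup>2 *\<^sub>R g)"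
  by (cases g) (simp add: wedge_def power2_eq_square)

lemma gam_pos: "gam > 0"
  by (simp add: gam_def)

lemma implicit_stage_limit:
  fixes v w G :: "real \<Rightarrow> real \<times> real" and B :: "real \<Rightarrow> real"
  assumes a: "a > 0"
    and w: "((\<lambda>e. e *\<^sub>R w e) \<longlongrightarrow> 0) (at_right 0)"
    and B: "(B \<longlongrightarrow> \<beta>) (at_right 0)" and \<beta>: "\<beta> \<noteq> 0"
    and G: "(G \<longlongrightarrow> g) (at_right 0)"
    and stage: "\<forall>\<^sub>F e in at_right 0. v e = w e + (a / e) *\<^sub>R ((1 / e) *\<^sub>R wedge (v e) (B e) + G e)"
  shows "((\<lambda>e. (1 / e) *\<^sub>R v e) \<longlongrightarrow> (1 / \<beta>\<^sup>2) *\<^sub>R wedge g \<beta>) (at_right 0)"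
    and "((\<lambda>e. (1 / e) *\<^sub>R wedge (v e) (B e) + G e) \<longlongrightarrow> 0) (at_right 0)"
proof -
  let ?F = "at_right (0::real)"
  define U where "U e = (1 / (B e)\<^sup>2) *\<^sub>R wedge (G e) (B e)" for e
  define d where "d e = (1 / e) *\<^sub>R v e - U e" for e
  define r where "r e = e\<^sup>2 *\<^sub>R U e - e *\<^sub>R w e" for e
  have U: "(U \<longlongrightarrow> (1 / \<beta>\<^sup>2) *\<^sub>R wedge g \<beta>) ?F"
    unfolding U_def by (intro tendsto_intros B G) (use \<beta> in simp)
  have r: "(r \<longlongrightarrow> 0) ?F"
    unfolding r_def using tendsto_diff[OF tendsto_scaleR[OF tendsto_power[OF tendsto_ident_at, of 2] U] w]
    by simp
  have pos: "\<forall>\<^sub>F e in ?F. e > 0 \<and> B e \<noteq> 0"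
    using eventually_at_right_less tendsto_imp_eventually_ne[OF B \<beta>] by (rule eventually_conj)
  have force: "\<forall>\<^sub>F e in ?F. (1 / e) *\<^sub>R wedge (v e) (B e) + G e = wedge (d e) (B e)"
    using pos by eventually_elim
      (simp add: d_def U_def wedge_diff_left wedge_scaleR_left wedge_wedge_left)
  have reduced_stage: "\<forall>\<^sub>F e in ?F. wedge (d e) (a * B e) - e\<^sup>2 *\<^sub>R d e = r e"
    using pos stage force
  proof eventually_elim
    case (elim e)
    then have "e *\<^sub>R v e = e *\<^sub>R w e + a *\<^sub>R wedge (d e) (B e)"
      by (simp add: scaleR_add_right)
    moreover have "v e = e *\<^sub>R (d e + U e)"
      using elim(1) by (simp add: d_def)
    ultimately show ?case
      by (simp add: r_def wedge_def power2_eq_square algebra_simps)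
  qed
  have d: "(d \<longlongrightarrow> 0) ?F"
  proof (rule Lim_null_comparison)
    show "\<forall>\<^sub>F e in ?F. norm (d e) \<le> norm (r e) / (a * \<bar>B e\<bar>)"
      using pos reduced_stage
    proof eventually_elim
      case (elim e)
      have "(a * \<bar>B e\<bar>) * norm (d e) \<le> norm (r e)"
        using norm_wedge_diff_scaleR_ge[of "a * B e" "d e" "e\<^sup>2"] elim(2) a
        by (simp add: abs_mult)
      then show ?case
        using a elim(1) by (simp add: field_simps)
    qed
    show "((\<lambda>e. norm (r e) / (a * \<bar>B e\<bar>)) \<longlongrightarrow> 0) ?F"
      using tendsto_divide[OF tendsto_norm[OF r] tendsto_mult[OF tendsto_const tendsto_rabs[OF B]]] a \<beta>
      by simp
  qed
  show "((\<lambda>e. (1 / e) *\<^sub>R v e) \<longlongrightarrow> (1 / \<beta>\<^sup>2) *\<^sub>R wedge g \<beta>) ?F"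
    using tendsto_add[OF d U] by (simp add: d_def)
  show "((\<lambda>e. (1 / e) *\<^sub>R wedge (v e) (B e) + G e) \<longlongrightarrow> 0) ?F"
    using tendsto_wedge[OF d B] tendsto_cong[OF force] by simp
qed

lemma tendsto_continuous_on_time_slice:
  assumes f: "continuous_on ({0..} \<times> UNIV) (\<lambda>(t, z). f t z)" and t: "t \<ge> (0::real)"
    and X: "(X \<longlongrightarrow> y) F"
  shows "((\<lambda>e. f t (X e)) \<longlongrightarrow> f t y) F"
proof -
  have "((\<lambda>e. (\<lambda>(t, z). f t z) (t, X e)) \<longlongrightarrow> (\<lambda>(t, z). f t z) (t, y)) F"
    by (rule continuous_on_tendsto_compose[OF f]) (use t in \<open>auto intro!: tendsto_intros X\<close>)
  then show ?thesis by simp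
qed

lemma scheme_step_stages:
  assumes "scheme_step E b eps dt tn xn vn xn1 vn1"
  shows "\<exists>v1. v1 = vn + (gam * dt / eps) *\<^sub>R ((1 / eps) *\<^sub>R wedge v1 (b tn xn) + E tn xn)
    \<and> vn1 = vn + ((1 - gam) * dt / eps) *\<^sub>R ((1 / eps) *\<^sub>R wedge v1 (b tn xn) + E tn xn)
        + (gam * dt / eps) *\<^sub>R ((1 / eps) *\<^sub>R
            wedge vn1 (b (tn + dt / (2 * gam)) (xn + (dt / (2 * gam * eps)) *\<^sub>R v1))
          + E (tn + dt / (2 * gam)) (xn + (dt / (2 * gam * eps)) *\<^sub>R v1))
    \<and> xn1 = xn + ((1 - gam) * dt / eps) *\<^sub>R v1 + (gam * dt / eps) *\<^sub>R vn1"
proof -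
  from assms obtain x1 v1 F1 x2 v2 F2 where
    "x1 = xn + (gam * dt / eps) *\<^sub>R v1"
    and v1: "v1 = vn + (gam * dt / eps) *\<^sub>R F1"
    and F1: "F1 = (1 / eps) *\<^sub>R wedge v1 (b tn xn) + E tn xn"
    and x2: "x2 = xn + ((1 - gam) * dt / eps) *\<^sub>R v1 + (gam * dt / eps) *\<^sub>R v2"
    and v2: "v2 = vn + ((1 - gam) * dt / eps) *\<^sub>R F1 + (gam * dt / eps) *\<^sub>R F2"
    and F2: "F2 = (1 / eps) *\<^sub>R wedge v2 (b (tn + dt / (2 * gam)) (xn + (dt / (2 * gam * eps)) *\<^sub>R v1))
       + E (tn + dt / (2 * gam)) (xn + (dt / (2 * gam * eps)) *\<^sub>R v1)"
    and "xn1 = x2" "vn1 = v2"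
    unfolding scheme_step_def Let_def by (elim exE conjE) (rule that; assumption)
  with v1 v2 x2 show ?thesis
    unfolding F1 F2 by blast
qed

lemma tendsto_divide_scaleR_at_right:
  fixes v :: "real \<Rightarrow> 'a::real_normed_vector"
  assumes "((\<lambda>e. (1 / e) *\<^sub>R v e) \<longlongrightarrow> u) (at_right 0)"
  shows "((\<lambda>e. (k / e) *\<^sub>R v e) \<longlongrightarrow> k *\<^sub>R u) (at_right 0)"
  using tendsto_scaleR[OF tendsto_const[of k] assms] by simp

lemma tendsto_scaleR_at_right_zero:
  fixes v :: "real \<Rightarrow> 'a::real_normed_vector"
  assumes "((\<lambda>e. (1 / e) *\<^sub>R v e) \<longlongrightarrow> u) (at_right 0)"
  shows "((\<lambda>e. e *\<^sub>R v e) \<longlongrightarrow> 0) (at_right 0)"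
proof -
  have "\<forall>\<^sub>F e in at_right 0. e\<^sup>2 *\<^sub>R ((1 / e) *\<^sub>R v e) = e *\<^sub>R v e"
    using eventually_at_right_less by (rule eventually_mono) (simp add: power2_eq_square scaleR_scaleR)
  moreover have "((\<lambda>e. e\<^sup>2 *\<^sub>R ((1 / e) *\<^sub>R v e)) \<longlongrightarrow> 0) (at_right 0)"
    using tendsto_scaleR[OF tendsto_power[OF tendsto_ident_at, of 2] assms] by simp
  ultimately show ?thesis
    by (rule Lim_transform_eventually[rotated])
qed

lemma tendsto_scaleR_add_divide_at_right_zero:
  fixes w F :: "real \<Rightarrow> 'a::real_normed_vector"
  assumes "((\<lambda>e. e *\<^sub>R w e) \<longlongrightarrow> 0) (at_right 0)" and "(F \<longlongrightarrow> 0) (at_right 0)"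
  shows "((\<lambda>e. e *\<^sub>R (w e + (c / e) *\<^sub>R F e)) \<longlongrightarrow> 0) (at_right 0)"
proof -
  have "\<forall>\<^sub>F e in at_right 0. e *\<^sub>R w e + c *\<^sub>R F e = e *\<^sub>R (w e + (c / e) *\<^sub>R F e)"
    using eventually_at_right_less by (rule eventually_mono) (simp add: scaleR_add_right scaleR_scaleR)
  moreover have "((\<lambda>e. e *\<^sub>R w e + c *\<^sub>R F e) \<longlongrightarrow> 0) (at_right 0)"
    using tendsto_add[OF assms(1) tendsto_scaleR[OF tendsto_const assms(2)]] by simp
  ultimately show ?thesis
    by (rule Lim_transform_eventually[rotated])
qed

lemma scheme_step_limit:
  assumes contE: "continuous_on ({0..} \<times> UNIV) (\<lambda>(t, z). E t z)"
    and contb: "continuous_on ({0..} \<times> UNIV) (\<lambda>(t, z). b t z)"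
    and bnz: "\<forall>t\<ge>0. \<forall>z. b t z \<noteq> 0"
    and dt: "dt > 0" and tn: "tn \<ge> 0"
    and X: "(xn \<longlongrightarrow> y) (at_right 0)" and W: "((\<lambda>e. e *\<^sub>R vn e) \<longlongrightarrow> 0) (at_right 0)"
    and S: "\<forall>\<^sub>F e in at_right 0. scheme_step E b e dt tn (xn e) (vn e) (xn1 e) (vn1 e)"
  shows "(xn1 \<longlongrightarrow> y + ((1 - gam) * dt) *\<^sub>R drift E b tn y
            + (gam * dt) *\<^sub>R drift E b (tn + dt / (2 * gam)) (y + (dt / (2 * gam)) *\<^sub>R drift E b tn y))
          (at_right 0)"
    and "((\<lambda>e. e *\<^sub>R vn1 e) \<longlongrightarrow> 0) (at_right 0)"
proof -
  let ?F = "at_right (0::real)"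
  define th where "th = tn + dt / (2 * gam)"
  define yh where "yh = y + (dt / (2 * gam)) *\<^sub>R drift E b tn y"
  have a: "gam * dt > 0" and th: "th \<ge> 0"
    using gam_pos dt tn by (simp_all add: th_def)
  have "\<forall>\<^sub>F e in ?F. \<exists>v1.
      v1 = vn e + (gam * dt / e) *\<^sub>R ((1 / e) *\<^sub>R wedge v1 (b tn (xn e)) + E tn (xn e))
    \<and> vn1 e = vn e + ((1 - gam) * dt / e) *\<^sub>R ((1 / e) *\<^sub>R wedge v1 (b tn (xn e)) + E tn (xn e))
        + (gam * dt / e) *\<^sub>R ((1 / e) *\<^sub>R wedge (vn1 e) (b th (xn e + (dt / (2 * gam * e)) *\<^sub>R v1))
          + E th (xn e + (dt / (2 * gam * e)) *\<^sub>R v1))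
    \<and> xn1 e = xn e + ((1 - gam) * dt / e) *\<^sub>R v1 + (gam * dt / e) *\<^sub>R vn1 e"
    (is "\<forall>\<^sub>F e in ?F. \<exists>v1. ?stage1 e v1 \<and> ?stage2 e v1 \<and> ?update e v1")
    using S unfolding th_def by (rule eventually_mono) (rule scheme_step_stages)
  then obtain v1 where stages: "\<forall>\<^sub>F e in ?F. ?stage1 e (v1 e) \<and> ?stage2 e (v1 e) \<and> ?update e (v1 e)"
    unfolding eventually_ex by blast
  have b0: "((\<lambda>e. b tn (xn e)) \<longlongrightarrow> b tn y) ?F" and E0: "((\<lambda>e. E tn (xn e)) \<longlongrightarrow> E tn y) ?F"
    using contb contE tn X by (auto intro: tendsto_continuous_on_time_slice)
  have "\<forall>\<^sub>F e in ?F. ?stage1 e (v1 e)"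
    using stages by (rule eventually_mono) (rule conjunct1)
  note stage1_limit = implicit_stage_limit[where v = v1, OF a W b0 _ E0 this]
  have u1: "((\<lambda>e. (1 / e) *\<^sub>R v1 e) \<longlongrightarrow> drift E b tn y) ?F"
    and F1: "((\<lambda>e. (1 / e) *\<^sub>R wedge (v1 e) (b tn (xn e)) + E tn (xn e)) \<longlongrightarrow> 0) ?F"
    using stage1_limit bnz tn unfolding drift_def by auto
  have xh: "((\<lambda>e. xn e + (dt / (2 * gam * e)) *\<^sub>R v1 e) \<longlongrightarrow> yh) ?F"
    using tendsto_add[OF X tendsto_divide_scaleR_at_right[OF u1, of "dt / (2 * gam)"]]
    by (simp add: yh_def)
  have "((\<lambda>e. b th (xn e + (dt / (2 * gam * e)) *\<^sub>R v1 e)) \<longlongrightarrow> b th yh) ?F"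
    and "((\<lambda>e. E th (xn e + (dt / (2 * gam * e)) *\<^sub>R v1 e)) \<longlongrightarrow> E th yh) ?F"
    using contb contE th xh by (auto intro: tendsto_continuous_on_time_slice)
  moreover have "\<forall>\<^sub>F e in ?F. ?stage2 e (v1 e)"
    using stages by (rule eventually_mono) (elim conjE)
  ultimately have "((\<lambda>e. (1 / e) *\<^sub>R vn1 e) \<longlongrightarrow> (1 / (b th yh)\<^sup>2) *\<^sub>R wedge (E th yh) (b th yh)) ?F"
    using bnz th tendsto_scaleR_add_divide_at_right_zero[OF W F1]
    by (intro implicit_stage_limit(1)[OF a]) (auto simp del: split_paired_All)
  then have u2: "((\<lambda>e. (1 / e) *\<^sub>R vn1 e) \<longlongrightarrow> drift E b th yh) ?F"
    by (simp add: drift_def)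
  have "\<forall>\<^sub>F e in ?F. ?update e (v1 e)"
    using stages by (rule eventually_mono) (elim conjE)
  with tendsto_add[OF tendsto_add[OF X tendsto_divide_scaleR_at_right[OF u1]]
      tendsto_divide_scaleR_at_right[OF u2]]
  show "(xn1 \<longlongrightarrow> y + ((1 - gam) * dt) *\<^sub>R drift E b tn y
            + (gam * dt) *\<^sub>R drift E b (tn + dt / (2 * gam)) (y + (dt / (2 * gam)) *\<^sub>R drift E b tn y))
          ?F"
    unfolding th_def yh_def by (simp add: tendsto_cong)
  show "((\<lambda>e. e *\<^sub>R vn1 e) \<longlongrightarrow> 0) ?F"
    using u2 by (rule tendsto_scaleR_at_right_zero)
qed

theorem proposition3p3:
  fixes E :: "real \<Rightarrow> real \<times> real \<Rightarrow> real \<times> real"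
    and b :: "real \<Rightarrow> real \<times> real \<Rightarrow> real"
    and dt T :: real
    and x v :: "real \<Rightarrow> nat \<Rightarrow> real \<times> real"
    and y0 :: "real \<times> real"
  assumes contE: "continuous_on ({0..} \<times> UNIV) (\<lambda>(t, z). E t z)"
    and contb: "continuous_on ({0..} \<times> UNIV) (\<lambda>(t, z). b t z)"
    and bnz: "\<forall>t\<ge>0. \<forall>z. b t z \<noteq> 0"
    and dt_pos: "dt > 0" and T_pos: "T > 0"
    and scheme: "\<forall>eps>0. \<forall>n < nat \<lfloor>T / dt\<rfloor>.
        scheme_step E b eps dt (real n * dt) (x eps n) (v eps n) (x eps (Suc n)) (v eps (Suc n))"
    and bdd: "\<forall>n\<in>{1..nat \<lfloor>T / dt\<rfloor>}. \<exists>C. \<forall>eps>0.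
        norm (x eps n) \<le> C \<and> norm (eps *\<^sub>R v eps n) \<le> C"
    and init_x: "((\<lambda>eps. x eps 0) \<longlongrightarrow> y0) (at_right 0)"
    and init_v: "((\<lambda>eps. eps *\<^sub>R v eps 0) \<longlongrightarrow> 0) (at_right 0)"
  shows "\<forall>n \<le> nat \<lfloor>T / dt\<rfloor>. ((\<lambda>eps. x eps n) \<longlongrightarrow> ylim E b dt y0 n) (at_right 0)"
proof -
  have "((\<lambda>eps. x eps n) \<longlongrightarrow> ylim E b dt y0 n) (at_right 0)
      \<and> ((\<lambda>eps. eps *\<^sub>R v eps n) \<longlongrightarrow> 0) (at_right 0)"
    if "n \<le> nat \<lfloor>T / dt\<rfloor>" for n
    using that
  proof (induction n)
    case 0
    then show ?case using init_x init_v by simp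
  next
    case (Suc n)
    then have IH: "((\<lambda>eps. x eps n) \<longlongrightarrow> ylim E b dt y0 n) (at_right 0)"
      "((\<lambda>eps. eps *\<^sub>R v eps n) \<longlongrightarrow> 0) (at_right 0)"
      and n: "n < nat \<lfloor>T / dt\<rfloor>" by auto
    have "\<forall>\<^sub>F eps in at_right 0.
        scheme_step E b eps dt (real n * dt) (x eps n) (v eps n) (x eps (Suc n)) (v eps (Suc n))"
      using eventually_at_right_less by (rule eventually_mono) (use scheme n in blast)
    moreover have "real n * dt \<ge> 0"
      using dt_pos by simp
    ultimately show ?case
      using scheme_step_limit[OF contE contb bnz dt_pos _ IH] by (simp add: Let_def)
  qed
  then show ?thesis by blast
qed

end
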